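(* Let $n\ge3$ and $r\in[3,n]$. Then: (1) $\mathfrak b_{a_2}\cdot\tilde{\mathfrak b}_r=\prod_{i=1}^r\mathfrak b_{a_i}$; (2) $I_{C_n}=\mathfrak b_{a_2}\cdot\tilde{\mathfrak b}_r\cdot\prod_{i=r+1}^{n+1}\mathfrak b_{a_i}$.
   Context: Let $K$ be a field, $N\ge2$, $R=K[X_1,\dots,X_N]$, $X=X_1$, $Y=X_2$. $[x,y]=\{z\in\mathbb Z:x\le z\le y\}$. For $i\in\mathbb N^+$, $\mathfrak b_i=\langle X^i,Y^i\rangle$. Fix an integer $n\ge 3$ and positive integers $a_1,\dots,a_{n+1}$ with (C1) $a_{n+1}=a_1+\dots+a_{n-1}+2a_n$ and (C2) $a_{i+1}>2(a_1+\dots+a_i)$ for all $i\in[1,n-1]$. For $I\subseteq[1,n+1]$ put $a_I=\sum_{i\in I}a_i$ ($a_\emptyset=0$). $C_n=\{a_I:I\subseteq[1,n+1]\}$, $\mu=a_{[1,n+1]}$, and $I_{C_n}=\langle X^{\mu-c}Y^c:c\in C_n\rangle$. For $r\in[3,n]$, $\tilde{\mathfrak b}_r$ is the ideal generated by $\mathfrak b_{a_1}\mathfrak b_{a_3}\mathfrak b_{a_4}\cdots\mathfrak b_{a_r}$ together with the monomial $X^{a_{[3,r]}-a_2}Y^{a_3-a_2}$. *)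

theory Defs
  imports "HOL-Library.Poly_Mapping"
begin

(* Polynomials in variables indexed by nat (variable X_(i+1) has index i),
  coefficients in 'a.  A monomial is an exponent vector nat \<Rightarrow>\<^sub>0 nat. *)
type_synonym 'a mpoly = "(nat \<Rightarrow>\<^sub>0 nat) \<Rightarrow>\<^sub>0 'a"

definition polyring :: "nat \<Rightarrow> 'a::comm_ring_1 mpoly set" where
  "polyring N = {p :: 'a mpoly. \<forall>m\<in>Poly_Mapping.keys p. \<forall>v\<in>Poly_Mapping.keys m. v < N}"

(* The ideal of R generated by a set S (S assumed inside R): all finite R-linear
  combinations of elements of S. *)
definition gen_ideal :: "nat \<Rightarrow> 'a::comm_ring_1 mpoly set \<Rightarrow> 'a mpoly set" where
  "gen_ideal N S = {p. \<exists>fs. (\<forall>(c, s)\<in>set fs. c \<in> polyring N \<and> s \<in> S)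
       \<and> p = sum_list (map (\<lambda>(c, s). c * s) fs)}"

definition ideal_mult :: "nat \<Rightarrow> 'a::comm_ring_1 mpoly set \<Rightarrow> 'a mpoly set \<Rightarrow> 'a mpoly set" where
  "ideal_mult N I J = gen_ideal N {p * q | p q. p \<in> I \<and> q \<in> J}"

definition ideal_prod :: "nat \<Rightarrow> 'a::comm_ring_1 mpoly set list \<Rightarrow> 'a mpoly set" where
  "ideal_prod N Is = foldr (ideal_mult N) Is (polyring N)"

(* The monomial X^i Y^j where X = X_1 (index 0), Y = X_2 (index 1). *)
definition monoXY :: "nat \<Rightarrow> nat \<Rightarrow> 'a::comm_ring_1 mpoly" where
  "monoXY i j = Poly_Mapping.single (Poly_Mapping.single 0 i + Poly_Mapping.single 1 j) 1"

definition bideal :: "nat \<Rightarrow> nat \<Rightarrow> 'a::comm_ring_1 mpoly set" where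
  "bideal N i = gen_ideal N {monoXY i 0, monoXY 0 i}"

definition aI :: "(nat \<Rightarrow> nat) \<Rightarrow> nat set \<Rightarrow> nat" where
  "aI a I = (\<Sum>i\<in>I. a i)"

definition Cset :: "(nat \<Rightarrow> nat) \<Rightarrow> nat \<Rightarrow> nat set" where
  "Cset a n = {aI a I | I. I \<subseteq> {1..n+1}}"

definition ICn :: "nat \<Rightarrow> (nat \<Rightarrow> nat) \<Rightarrow> nat \<Rightarrow> 'a::comm_ring_1 mpoly set" where
  "ICn N a n = gen_ideal N {monoXY (aI a {1..n+1} - c) c | c. c \<in> Cset a n}"

definition btilde :: "nat \<Rightarrow> (nat \<Rightarrow> nat) \<Rightarrow> nat \<Rightarrow> 'a::comm_ring_1 mpoly set" where
  "btilde N a r = gen_ideal N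
     (ideal_prod N (map (\<lambda>i. bideal N (a i)) (1 # [3..<r+1]))
      \<union> {monoXY (aI a {3..r} - a 2) (a 3 - a 2)})"

end

theory Submission
  imports Defs
begin

(* Write T(A) (subset_sum_monos a A) for the monomials X^(a_(A-I)) Y^(a_I), I \<subseteq> A.
  Multiplying out generators, the product of the b_(a_i), i \<in> A, is generated by T(A), and
  T(A) T(B) = T(A \<union> B) for disjoint A and B; I_(C_n) is generated by T([1,n+1]) and so
  factors along any partition of [1,n+1].  The ideal b_(a_2) tilde-b_r is generated by
  T([1,r]) together with X^(a_2) m and Y^(a_2) m, where m is the extra generator of tilde-b_r;
  both are multiples of elements of T([1,r]) once a_1 + 2 a_2 \<le> a_3. *)

lemma polyring_mult_closed:
  assumes "p \<in> polyring N" "q \<in> polyring N"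
  shows "p * q \<in> polyring N"
proof -
  have "v < N" if m: "m \<in> Poly_Mapping.keys (p * q)" and v: "v \<in> Poly_Mapping.keys m" for m v
  proof -
    obtain x y where "m = x + y" "x \<in> Poly_Mapping.keys p" "y \<in> Poly_Mapping.keys q"
      using keys_mult m by blast
    with v keys_add[of x y] assms show ?thesis
      unfolding polyring_def by blast
  qed
  then show ?thesis
    unfolding polyring_def by blast
qed

lemma polyring_add_closed:
  "p \<in> polyring N \<Longrightarrow> q \<in> polyring N \<Longrightarrow> p + q \<in> polyring N"
  using keys_add[of p q] unfolding polyring_def by blast

lemma one_in_polyring: "1 \<in> polyring N"
  unfolding polyring_def by simp

definition is_ideal :: "nat \<Rightarrow> 'a::comm_ring_1 mpoly set \<Rightarrow> bool" where
  "is_ideal N I \<longleftrightarrow> 0 \<in> I \<and> (\<forall>x\<in>I. \<forall>y\<in>I. x + y \<in> I) \<and> (\<forall>c\<in>polyring N. \<forall>x\<in>I. c * x \<in> I)"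

lemma is_ideal_polyring: "is_ideal N (polyring N)"
  unfolding is_ideal_def
  by (simp add: polyring_add_closed polyring_mult_closed) (simp add: polyring_def)

lemma is_ideal_gen_ideal:
  fixes S :: "'a::comm_ring_1 mpoly set"
  shows "is_ideal N (gen_ideal N S)"
  unfolding is_ideal_def
proof (intro conjI ballI)
  show "0 \<in> gen_ideal N S"
    unfolding gen_ideal_def by (intro CollectI exI[of _ "[]"]) simp
next
  fix x y assume "x \<in> gen_ideal N S" "y \<in> gen_ideal N S"
  then obtain fs gs where
    "\<forall>(c, s)\<in>set fs. c \<in> polyring N \<and> s \<in> S" "x = sum_list (map (\<lambda>(c, s). c * s) fs)"
    "\<forall>(c, s)\<in>set gs. c \<in> polyring N \<and> s \<in> S" "y = sum_list (map (\<lambda>(c, s). c * s) gs)"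
    unfolding gen_ideal_def by blast
  then show "x + y \<in> gen_ideal N S"
    unfolding gen_ideal_def by (intro CollectI exI[of _ "fs @ gs"]) auto
next
  fix c x :: "'a mpoly" assume c: "c \<in> polyring N" and "x \<in> gen_ideal N S"
  then obtain fs where fs:
    "\<forall>(c, s)\<in>set fs. c \<in> polyring N \<and> s \<in> S" "x = sum_list (map (\<lambda>(c, s). c * s) fs)"
    unfolding gen_ideal_def by blast
  let ?cfs = "map (\<lambda>(d, s). (c * d, s)) fs"
  have "c * x = sum_list (map (\<lambda>(d, s). d * s) ?cfs)"
    unfolding fs(2) by (induction fs) (auto simp: algebra_simps)
  moreover have "\<forall>(d, s)\<in>set ?cfs. d \<in> polyring N \<and> s \<in> S"
    using fs(1) c polyring_mult_closed by fastforce
  ultimately show "c * x \<in> gen_ideal N S"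
    unfolding gen_ideal_def by blast
qed

lemma gen_ideal_mult_mem: "s \<in> S \<Longrightarrow> c \<in> polyring N \<Longrightarrow> c * s \<in> gen_ideal N S"
  unfolding gen_ideal_def by (intro CollectI exI[of _ "[(c, s)]"]) auto

lemma gen_ideal_superset: "S \<subseteq> gen_ideal N S"
  using gen_ideal_mult_mem[OF _ one_in_polyring] by fastforce

lemma gen_ideal_least:
  assumes "S \<subseteq> I" "is_ideal N I"
  shows "gen_ideal N S \<subseteq> I"
proof
  fix x assume "x \<in> gen_ideal N S"
  then obtain fs where fs:
    "\<forall>(c, s)\<in>set fs. c \<in> polyring N \<and> s \<in> S" "x = sum_list (map (\<lambda>(c, s). c * s) fs)"
    unfolding gen_ideal_def by blast
  from fs(1) have "sum_list (map (\<lambda>(c, s). c * s) fs) \<in> I"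
    using assms unfolding is_ideal_def by (induction fs) auto
  with fs(2) show "x \<in> I" by simp
qed

lemma gen_ideal_subset_iff: "gen_ideal N S \<subseteq> gen_ideal N T \<longleftrightarrow> S \<subseteq> gen_ideal N T"
  using gen_ideal_least[OF _ is_ideal_gen_ideal] gen_ideal_superset by blast

lemma gen_ideal_eqI: "S \<subseteq> gen_ideal N T \<Longrightarrow> T \<subseteq> gen_ideal N S \<Longrightarrow> gen_ideal N S = gen_ideal N T"
  by (simp add: gen_ideal_subset_iff subset_antisym)

lemma gen_ideal_Un_gen_ideal: "gen_ideal N (gen_ideal N S \<union> T) = gen_ideal N (S \<union> T)"
proof (rule gen_ideal_eqI)
  show "gen_ideal N S \<union> T \<subseteq> gen_ideal N (S \<union> T)"
    using gen_ideal_subset_iff[of N S "S \<union> T"] gen_ideal_superset[of "S \<union> T" N] by blast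
  show "S \<union> T \<subseteq> gen_ideal N (gen_ideal N S \<union> T)"
    using gen_ideal_superset[of S N] gen_ideal_superset[of "gen_ideal N S \<union> T" N] by blast
qed

lemma gen_ideal_insert_redundant: "x \<in> gen_ideal N S \<Longrightarrow> gen_ideal N (insert x S) = gen_ideal N S"
  by (rule gen_ideal_eqI) (use gen_ideal_superset in blast)+

lemma polyring_eq_gen_ideal_one: "polyring N = gen_ideal N {1}"
proof
  show "polyring N \<subseteq> gen_ideal N {1}"
    using gen_ideal_mult_mem[of 1 "{1}" _ N] by fastforce
  show "gen_ideal N {1} \<subseteq> polyring N"
    by (rule gen_ideal_least[OF _ is_ideal_polyring]) (simp add: one_in_polyring)
qed

lemma ideal_mult_gen_ideal:
  "ideal_mult N (gen_ideal N S) (gen_ideal N T) = gen_ideal N {s * t | s t. s \<in> S \<and> t \<in> T}"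
  (is "_ = gen_ideal N ?ST")
proof (unfold ideal_mult_def, rule gen_ideal_eqI)
  show "?ST \<subseteq> gen_ideal N {p * q |p q. p \<in> gen_ideal N S \<and> q \<in> gen_ideal N T}"
    using gen_ideal_superset[of S N] gen_ideal_superset[of T N]
    by (blast intro: gen_ideal_superset[THEN subsetD])
  \<comment> \<open>Bilinearity, by gen_ideal_least applied to one factor at a time.\<close>
  have right: "gen_ideal N T \<subseteq> {q. s * q \<in> gen_ideal N ?ST}" if "s \<in> S" for s
  proof (rule gen_ideal_least)
    show "T \<subseteq> {q. s * q \<in> gen_ideal N ?ST}"
      using that gen_ideal_superset[of "?ST" N] by blast
    show "is_ideal N {q. s * q \<in> gen_ideal N ?ST}"
      using is_ideal_gen_ideal[of N ?ST] unfolding is_ideal_def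
      by (auto simp: distrib_left mult.left_commute[of s])
  qed
  have "gen_ideal N S \<subseteq> {p. \<forall>q\<in>gen_ideal N T. p * q \<in> gen_ideal N ?ST}"
  proof (rule gen_ideal_least)
    show "S \<subseteq> {p. \<forall>q\<in>gen_ideal N T. p * q \<in> gen_ideal N ?ST}"
      using right by blast
    show "is_ideal N {p. \<forall>q\<in>gen_ideal N T. p * q \<in> gen_ideal N ?ST}"
      using is_ideal_gen_ideal[of N ?ST] unfolding is_ideal_def
      by (auto simp: distrib_right mult.assoc)
  qed
  then show "{p * q |p q. p \<in> gen_ideal N S \<and> q \<in> gen_ideal N T} \<subseteq> gen_ideal N ?ST"
    by blast
qed

lemma monoXY_in_polyring: "N \<ge> 2 \<Longrightarrow> monoXY i j \<in> polyring N"
  unfolding polyring_def monoXY_def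
  using keys_add[of "Poly_Mapping.single 0 i" "Poly_Mapping.single (1::nat) j"]
  by (fastforce split: if_splits)

lemma monoXY_mult: "monoXY i j * monoXY k l = (monoXY (i + k) (j + l) :: 'a::comm_ring_1 mpoly)"
  unfolding monoXY_def by (simp add: mult_single single_add algebra_simps)

lemma monoXY_0_0: "monoXY 0 0 = 1"
  unfolding monoXY_def by simp

lemma monoXY_mem_gen_ideal_if_divisible:
  fixes S :: "'a::comm_ring_1 mpoly set"
  assumes "N \<ge> 2" "monoXY i j \<in> S" "i \<le> k" "j \<le> l"
  shows "monoXY k l \<in> gen_ideal N S"
proof -
  have "monoXY k l = (monoXY (k - i) (l - j) * monoXY i j :: 'a mpoly)"
    using assms(3,4) by (simp add: monoXY_mult)
  then show ?thesis
    using gen_ideal_mult_mem[OF assms(2) monoXY_in_polyring[OF assms(1)]] by simp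
qed

definition subset_sum_monos :: "(nat \<Rightarrow> nat) \<Rightarrow> nat set \<Rightarrow> 'a::comm_ring_1 mpoly set" where
  "subset_sum_monos a A = {monoXY (aI a (A - I)) (aI a I) | I. I \<subseteq> A}"

lemma subset_sum_monos_empty: "subset_sum_monos a {} = {1}"
  unfolding subset_sum_monos_def by (simp add: aI_def monoXY_0_0)

lemma subset_sum_monos_singleton: "subset_sum_monos a {i} = {monoXY (a i) 0, monoXY 0 (a i)}"
proof -
  have "{I. I \<subseteq> {i}} = {{}, {i}}" by blast
  then have "subset_sum_monos a {i} = (\<lambda>I. monoXY (aI a ({i} - I)) (aI a I)) ` {{}, {i}}"
    unfolding subset_sum_monos_def by blast
  then show ?thesis by (simp add: aI_def)
qed

lemma subset_sum_mono_mult: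
  assumes "finite A" "finite B" "A \<inter> B = {}" "I \<subseteq> A" "J \<subseteq> B"
  shows "monoXY (aI a (A - I)) (aI a I) * monoXY (aI a (B - J)) (aI a J)
    = (monoXY (aI a ((A \<union> B) - (I \<union> J))) (aI a (I \<union> J)) :: 'a::comm_ring_1 mpoly)"
proof -
  have "(A \<union> B) - (I \<union> J) = (A - I) \<union> (B - J)"
    using assms by blast
  moreover have "aI a ((A - I) \<union> (B - J)) = aI a (A - I) + aI a (B - J)"
    unfolding aI_def using assms by (intro sum.union_disjoint) auto
  ultimately have "aI a ((A \<union> B) - (I \<union> J)) = aI a (A - I) + aI a (B - J)"
    by simp
  moreover have "aI a (I \<union> J) = aI a I + aI a J"
    unfolding aI_def using assms
    by (intro sum.union_disjoint) (auto intro: finite_subset)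
  ultimately show ?thesis
    by (simp add: monoXY_mult)
qed

lemma subset_sum_monos_mult:
  assumes "finite A" "finite B" "A \<inter> B = {}"
  shows "{s * t | s t. s \<in> subset_sum_monos a A \<and> t \<in> subset_sum_monos a B}
    = (subset_sum_monos a (A \<union> B) :: 'a::comm_ring_1 mpoly set)"
proof (intro equalityI subsetI)
  fix x :: "'a mpoly"
  assume "x \<in> {s * t | s t. s \<in> subset_sum_monos a A \<and> t \<in> subset_sum_monos a B}"
  then obtain I J where IJ: "I \<subseteq> A" "J \<subseteq> B"
    "x = monoXY (aI a (A - I)) (aI a I) * monoXY (aI a (B - J)) (aI a J)"
    unfolding subset_sum_monos_def by blast
  then have "x = monoXY (aI a ((A \<union> B) - (I \<union> J))) (aI a (I \<union> J))"
    using subset_sum_mono_mult[OF assms] by simp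
  moreover have "I \<union> J \<subseteq> A \<union> B"
    using IJ by blast
  ultimately show "x \<in> subset_sum_monos a (A \<union> B)"
    unfolding subset_sum_monos_def by blast
next
  fix x :: "'a mpoly"
  assume "x \<in> subset_sum_monos a (A \<union> B)"
  then obtain K where K: "K \<subseteq> A \<union> B" "x = monoXY (aI a ((A \<union> B) - K)) (aI a K)"
    unfolding subset_sum_monos_def by blast
  define I J where "I = K \<inter> A" and "J = K \<inter> B"
  have "K = I \<union> J"
    using K(1) unfolding I_def J_def by blast
  with K(2) have "x = monoXY (aI a ((A \<union> B) - (I \<union> J))) (aI a (I \<union> J))"
    by simp
  also have "\<dots> = monoXY (aI a (A - I)) (aI a I) * monoXY (aI a (B - J)) (aI a J)"
    unfolding I_def J_def by (rule subset_sum_mono_mult[OF assms, symmetric]) auto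
  moreover have "I \<subseteq> A" "J \<subseteq> B"
    unfolding I_def J_def by auto
  ultimately show "x \<in> {s * t | s t. s \<in> subset_sum_monos a A \<and> t \<in> subset_sum_monos a B}"
    unfolding subset_sum_monos_def by blast
qed

lemma ideal_prod_bideal_eq_gen_ideal:
  "distinct L \<Longrightarrow> ideal_prod N (map (\<lambda>i. bideal N (a i)) L)
    = (gen_ideal N (subset_sum_monos a (set L)) :: 'a::comm_ring_1 mpoly set)"
proof (induction L)
  case Nil
  then show ?case
    by (simp add: ideal_prod_def subset_sum_monos_empty polyring_eq_gen_ideal_one)
next
  case (Cons i L)
  have "ideal_prod N (map (\<lambda>i. bideal N (a i)) (i # L))
      = ideal_mult N (gen_ideal N (subset_sum_monos a {i}))
          (gen_ideal N (subset_sum_monos a (set L)) :: 'a mpoly set)"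
    using Cons by (simp add: ideal_prod_def bideal_def subset_sum_monos_singleton)
  also have "\<dots> = gen_ideal N (subset_sum_monos a ({i} \<union> set L))"
    unfolding ideal_mult_gen_ideal using Cons.prems by (subst subset_sum_monos_mult) auto
  finally show ?case by simp
qed

lemma ideal_prod_bideal_upt:
  "ideal_prod N (map (\<lambda>i. bideal N (a i)) [i..<j])
    = (gen_ideal N (subset_sum_monos a {i..<j}) :: 'a::comm_ring_1 mpoly set)"
  by (metis distinct_upt ideal_prod_bideal_eq_gen_ideal set_upt)

lemma ICn_eq_gen_ideal:
  "ICn N a n = (gen_ideal N (subset_sum_monos a {1..n+1}) :: 'a::comm_ring_1 mpoly set)"
proof -
  let ?U = "{1..n+1}"
  have "{monoXY (aI a ?U - c) c :: 'a mpoly | c. c \<in> Cset a n}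
      = (\<lambda>I. monoXY (aI a ?U - aI a I) (aI a I)) ` Pow ?U"
    unfolding Cset_def by blast
  also have "\<dots> = (\<lambda>I. monoXY (aI a (?U - I)) (aI a I)) ` Pow ?U"
    by (rule image_cong) (auto simp: aI_def sum_diff_nat finite_subset)
  also have "\<dots> = subset_sum_monos a ?U"
    unfolding subset_sum_monos_def by blast
  finally show ?thesis
    unfolding ICn_def by simp
qed

lemma btilde_eq_gen_ideal:
  "btilde N a r = (gen_ideal N (subset_sum_monos a (insert 1 {3..r})
     \<union> {monoXY (aI a {3..r} - a 2) (a 3 - a 2)}) :: 'a::comm_ring_1 mpoly set)"
proof -
  have "distinct (1 # [3..<r+1])" "set (1 # [3..<r+1]) = insert 1 {3..r}"
    by auto
  then have "ideal_prod N (map (\<lambda>i. bideal N (a i)) (1 # [3..<r+1]))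
      = (gen_ideal N (subset_sum_monos a (insert 1 {3..r})) :: 'a mpoly set)"
    using ideal_prod_bideal_eq_gen_ideal by metis
  then show ?thesis
    unfolding btilde_def by (simp only: gen_ideal_Un_gen_ideal)
qed

lemma bideal_mult_btilde_eq_gen_ideal_insert:
  assumes "3 \<le> r" "a 2 \<le> a 3"
  shows "ideal_mult N (bideal N (a 2)) (btilde N a r)
    = (gen_ideal N (insert (monoXY (aI a {3..r}) (a 3 - a 2))
        (insert (monoXY (aI a {3..r} - a 2) (a 3)) (subset_sum_monos a {1..r})))
       :: 'a::comm_ring_1 mpoly set)"
proof -
  let ?m = "monoXY (aI a {3..r} - a 2) (a 3 - a 2) :: 'a mpoly"
  let ?A = "insert 1 {3..r}"
  have "{2} \<union> ?A = {1..r}" "{2} \<inter> ?A = {}"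
    using \<open>3 \<le> r\<close> by auto
  moreover have "aI a {3..r} = a 3 + aI a {4..r}"
    using \<open>3 \<le> r\<close> by (simp add: aI_def atLeastAtMost_insertL[symmetric])
  ultimately have "{s * t | s t. s \<in> subset_sum_monos a {2} \<and> t \<in> subset_sum_monos a ?A}
        \<union> {monoXY (a 2) 0 * ?m, monoXY 0 (a 2) * ?m}
      = insert (monoXY (aI a {3..r}) (a 3 - a 2))
          (insert (monoXY (aI a {3..r} - a 2) (a 3)) (subset_sum_monos a {1..r}))"
    using \<open>a 2 \<le> a 3\<close> by (simp add: subset_sum_monos_mult monoXY_mult insert_commute)
  moreover have "{s * t | s t. s \<in> subset_sum_monos a {2} \<and> t \<in> subset_sum_monos a ?A \<union> {?m}}
      = {s * t | s t. s \<in> subset_sum_monos a {2} \<and> t \<in> subset_sum_monos a ?A}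
        \<union> {monoXY (a 2) 0 * ?m, monoXY 0 (a 2) * ?m}"
    unfolding subset_sum_monos_singleton by blast
  ultimately show ?thesis
    unfolding btilde_eq_gen_ideal bideal_def subset_sum_monos_singleton[symmetric] ideal_mult_gen_ideal
    by simp
qed

lemma bideal_mult_btilde:
  assumes "N \<ge> 2" "3 \<le> r" and a3: "a 1 + 2 * a 2 \<le> a 3"
  shows "ideal_mult N (bideal N (a 2)) (btilde N a r)
    = (gen_ideal N (subset_sum_monos a {1..r}) :: 'a::comm_ring_1 mpoly set)"
proof -
  let ?T = "subset_sum_monos a {1..r} :: 'a mpoly set"
  \<comment> \<open>X^(a_2) m is a multiple of the generator with I = {1,2}, and Y^(a_2) m of the one with I = {3}.\<close>
  have X_multiple: "monoXY (aI a {3..r}) (a 3 - a 2) \<in> gen_ideal N ?T"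
  proof (rule monoXY_mem_gen_ideal_if_divisible[OF \<open>N \<ge> 2\<close>])
    have "{1..r} - {1, 2} = {3..r}"
      by auto
    then show "monoXY (aI a {3..r}) (a 1 + a 2) \<in> ?T"
      unfolding subset_sum_monos_def using \<open>3 \<le> r\<close>
      by (intro CollectI exI[of _ "{1, 2}"]) (simp add: aI_def)
  qed (use a3 in simp_all)
  have Y_multiple: "monoXY (aI a {3..r} - a 2) (a 3) \<in> gen_ideal N ?T"
  proof (rule monoXY_mem_gen_ideal_if_divisible[OF \<open>N \<ge> 2\<close>])
    have "{1..r} - {3} = {1, 2} \<union> {4..r}"
      using \<open>3 \<le> r\<close> by auto
    then have "aI a ({1..r} - {3}) = a 1 + a 2 + aI a {4..r}"
      unfolding aI_def by (simp add: sum.union_disjoint)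
    then show "monoXY (a 1 + a 2 + aI a {4..r}) (a 3) \<in> ?T"
      unfolding subset_sum_monos_def using \<open>3 \<le> r\<close>
      by (intro CollectI exI[of _ "{3}"]) (simp add: aI_def)
    show "a 1 + a 2 + aI a {4..r} \<le> aI a {3..r} - a 2"
      using a3 \<open>3 \<le> r\<close> by (simp add: aI_def atLeastAtMost_insertL[symmetric])
  qed simp
  have "a 2 \<le> a 3"
    using a3 by simp
  then show ?thesis
    using X_multiple Y_multiple \<open>3 \<le> r\<close>
    by (simp add: bideal_mult_btilde_eq_gen_ideal_insert gen_ideal_insert_redundant
        gen_ideal_superset[THEN subsetD])
qed

theorem proposition4p6:
  fixes a :: "nat \<Rightarrow> nat" and n r N :: nat
  assumes "N \<ge> 2"
    and "n \<ge> 3"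
    and pos: "\<forall>i\<in>{1..n+1}. a i > 0"
    and C1: "a (n+1) = aI a {1..n-1} + 2 * a n"
    and C2: "\<forall>i\<in>{1..n-1}. a (i+1) > 2 * aI a {1..i}"
    and "3 \<le> r" and "r \<le> n"
  shows "(ideal_mult N (bideal N (a 2)) (btilde N a r :: 'k::field mpoly set)
           = ideal_prod N (map (\<lambda>i. bideal N (a i)) [1..<r+1]))
         \<and> ((ICn N a n :: 'k::field mpoly set)
           = ideal_mult N (ideal_mult N (bideal N (a 2)) (btilde N a r))
               (ideal_prod N (map (\<lambda>i. bideal N (a i)) [r+1..<n+2])))"
proof -
  have "2 \<in> {1..n-1}"
    using \<open>n \<ge> 3\<close> by simp
  with C2 have "a (2 + 1) > 2 * aI a {1..2}"
    by blast
  moreover have "aI a {1..2} = a 1 + a 2"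
    by (simp add: aI_def numeral_2_eq_2)
  ultimately have "a 1 + 2 * a 2 \<le> a 3"
    by simp
  then have part1: "ideal_mult N (bideal N (a 2)) (btilde N a r)
      = (gen_ideal N (subset_sum_monos a {1..r}) :: 'k mpoly set)"
    using bideal_mult_btilde \<open>N \<ge> 2\<close> \<open>3 \<le> r\<close> by blast
  have "{1..<r+1} = {1..r}" "{r+1..<n+2} = {r+1..n+1}"
    by auto
  moreover have "{s * t | s t. s \<in> subset_sum_monos a {1..r} \<and> t \<in> subset_sum_monos a {r+1..n+1}}
      = (subset_sum_monos a {1..n+1} :: 'k mpoly set)"
  proof -
    have "{1..r} \<union> {r+1..n+1} = {1..n+1}"
      using \<open>r \<le> n\<close> by auto
    then show ?thesis
      by (subst subset_sum_monos_mult) auto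
  qed
  ultimately show ?thesis
    unfolding part1 ideal_prod_bideal_upt ICn_eq_gen_ideal ideal_mult_gen_ideal by simp
qed

end
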